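(* In the model described in the context, if $(\tilde y_0^+,\tilde y_0^-)=(1,1)$ (deterministically), then $\Pr(W_2)-\Pr(W_1) = \tfrac12(G-A)$.
   Context: Model. Fix an integer $m\ge 2$, and reals $1>\rho>q>0$, $0\le\nu<\tfrac12$. A sample consists of ground-truth labels $y_0,y_1,\dots,y_m\in\{0,1\}$ and noisy labels $\tilde y_0,\dots,\tilde y_m\in\{0,1\}$. Given $y_0$, the labels $y_1,\dots,y_m$ are conditionally independent with $\Pr(y_i=1\mid y_0=1)=\rho$ and $\Pr(y_i=1\mid y_0=0)=q$ for $i\in\{1,\dots,m\}$. For $i\in\{1,\dots,m\}$, $\tilde y_i = 1-y_i$ with probability $\nu$ and $\tilde y_i=y_i$ otherwise, the flips being independent of each other and of everything else. A positive sample has $y_0=1$ and a negative sample has $y_0=0$; we draw one positive sample (superscript $+$) and one negative sample (superscript $-$) independently. The pair $(\tilde y_0^+,\tilde y_0^-)\in\{0,1\}^2$ has an arbitrary distribution, independent of all $y_i^\pm,\tilde y_i^\pm$ with $i\ge1$. Fix $\delta>0$. For each sample set $\bar s_{0,i} := \max(\tilde y_0,\tilde y_i)+\delta\min(\tilde y_0,\tilde y_i)$ for $i=1,\dots,m$, and let $\bar r_1\ge \bar r_2$ be the largest and second largest elements of $\{\bar s_{0,1},\dots,\bar s_{0,m}\}$ (as a multiset). Notation: $\rho' := (1-\nu)\rho+\nu(1-\rho)$, $q':=(1-\nu)q+\nu(1-q)$, $a:=1-\rho'$, $\gamma := \frac{1-q'}{1-\rho'}$, $A := m(1-a)a^{m-1}$,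 $G := m(1-\gamma a)(\gamma a)^{m-1}$. For $k\in\{1,2\}$, $\Pr(W_k) := \Pr(\bar r_k^+>\bar r_k^-) + \tfrac12\Pr(\bar r_k^+=\bar r_k^-)$. *)

theory Defs
  imports "HOL-Probability.Probability"
begin

text \<open>Noisy labels of the m non-anchor positions (indices 1..m) of one sample whose
  ground-truth anchor label y0 is fixed: y_i ~ Bernoulli(p) independently (p = rho for a
  positive sample, p = q for a negative one), flips f_i ~ Bernoulli(nu) independently,
  and the noisy label is y_i xor f_i.\<close>
definition noisy_labels :: "nat \<Rightarrow> real \<Rightarrow> real \<Rightarrow> (nat \<Rightarrow> bool) pmf" where
  "noisy_labels m p \<nu> =
     do { y \<leftarrow> Pi_pmf {1..m} False (\<lambda>_. bernoulli_pmf p);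
          f \<leftarrow> Pi_pmf {1..m} False (\<lambda>_. bernoulli_pmf \<nu>);
          return_pmf (\<lambda>i. y i \<noteq> f i) }"

text \<open>Joint law of one positive and one negative sample, each represented by
  (noisy anchor label, noisy labels 1..m). D is the (arbitrary) law of the pair of noisy
  anchor labels, independent of everything else.\<close>
definition sample_pmf ::
  "nat \<Rightarrow> real \<Rightarrow> real \<Rightarrow> real \<Rightarrow> (bool \<times> bool) pmf
     \<Rightarrow> ((bool \<times> (nat \<Rightarrow> bool)) \<times> (bool \<times> (nat \<Rightarrow> bool))) pmf" where
  "sample_pmf m \<rho> q \<nu> D =
     do { t \<leftarrow> D;
          a \<leftarrow> noisy_labels m \<rho> \<nu>;
          b \<leftarrow> noisy_labels m q \<nu>;
          return_pmf ((fst t, a), (snd t, b)) }"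

definition score :: "real \<Rightarrow> bool \<Rightarrow> bool \<Rightarrow> real" where
  "score \<delta> t0 ti = max (of_bool t0) (of_bool ti) + \<delta> * min (of_bool t0) (of_bool ti)"

text \<open>k-th largest element (k \<ge> 1) of the multiset {s_{0,1},...,s_{0,m}}.\<close>
definition rbar :: "nat \<Rightarrow> real \<Rightarrow> nat \<Rightarrow> bool \<times> (nat \<Rightarrow> bool) \<Rightarrow> real" where
  "rbar m \<delta> k s = rev (sort (map (\<lambda>i. score \<delta> (fst s) (snd s i)) [1..<m+1])) ! (k - 1)"

definition probW ::
  "nat \<Rightarrow> real \<Rightarrow> real \<Rightarrow> real \<Rightarrow> (bool \<times> bool) pmf \<Rightarrow> real \<Rightarrow> nat \<Rightarrow> real" where
  "probW m \<rho> q \<nu> D \<delta> k =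
     measure_pmf.prob (sample_pmf m \<rho> q \<nu> D) {(P, N). rbar m \<delta> k P > rbar m \<delta> k N}
     + 1/2 * measure_pmf.prob (sample_pmf m \<rho> q \<nu> D) {(P, N). rbar m \<delta> k P = rbar m \<delta> k N}"

end

theory Submission
  imports Defs
begin

(* With both noisy anchor labels equal to 1, the score s_{0,i} is 1 + delta when the i-th noisy
  label is 1 and 1 otherwise, so r_k = 1 + delta exactly when at least k of the m noisy labels
  are 1, and r_k = 1 otherwise. Since the noisy labels of the positive (negative) sample are
  i.i.d. Bernoulli(rho') (Bernoulli(q')), Pr(W_k) = 1/2 + (Pr(K+ >= k) - Pr(K- >= k)) / 2 for the
  numbers K+ and K- of noisy ones. In the difference for k = 2 and k = 1 only the probabilities of
  exactly one noisy one survive, m rho' (1 - rho')^(m-1) = A and m q' (1 - q')^(m-1) = G,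
  the latter because gamma a = 1 - q'. *)

definition flip_prob :: "real \<Rightarrow> real \<Rightarrow> real" where
  "flip_prob \<nu> p = (1 - \<nu>) * p + \<nu> * (1 - p)"

lemma one_minus_flip_prob: "1 - flip_prob \<nu> p = (1 - \<nu>) * (1 - p) + \<nu> * p"
  by (simp add: flip_prob_def algebra_simps)

lemma flip_prob_bounds:
  assumes "0 \<le> p" "p \<le> 1" "0 \<le> \<nu>" "\<nu> \<le> 1"
  shows "0 \<le> flip_prob \<nu> p" "flip_prob \<nu> p \<le> 1"
proof -
  show "0 \<le> flip_prob \<nu> p"
    using assms by (simp add: flip_prob_def)
  have "0 \<le> 1 - flip_prob \<nu> p"
    unfolding one_minus_flip_prob using assms by simp
  then show "flip_prob \<nu> p \<le> 1" by simp
qed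

lemma bernoulli_pmf_xor:
  assumes "0 \<le> p" "p \<le> 1" "0 \<le> \<nu>" "\<nu> \<le> 1"
  shows "do { y \<leftarrow> bernoulli_pmf p; f \<leftarrow> bernoulli_pmf \<nu>; return_pmf (y \<noteq> f) }
       = bernoulli_pmf (flip_prob \<nu> p)"
proof (rule pmf_eqI)
  fix b :: bool
  show "pmf (do { y \<leftarrow> bernoulli_pmf p; f \<leftarrow> bernoulli_pmf \<nu>; return_pmf (y \<noteq> f) }) b
      = pmf (bernoulli_pmf (flip_prob \<nu> p)) b"
    using assms flip_prob_bounds[OF assms]
    by (cases b) (simp_all add: pmf_bind flip_prob_def algebra_simps)
qed

lemma noisy_labels_eq_Pi_pmf:
  assumes "0 \<le> p" "p \<le> 1" "0 \<le> \<nu>" "\<nu> \<le> 1"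
  shows "noisy_labels m p \<nu> = Pi_pmf {1..m} False (\<lambda>_. bernoulli_pmf (flip_prob \<nu> p))"
proof -
  let ?A = "{1..m}"
  let ?Y = "Pi_pmf ?A False (\<lambda>_. bernoulli_pmf p)" and ?F = "Pi_pmf ?A False (\<lambda>_. bernoulli_pmf \<nu>)"
  have xor: "Pi_pmf ?A False (\<lambda>x. return_pmf (Y x \<noteq> F x)) = return_pmf (\<lambda>i. Y i \<noteq> F i)"
    if "Y \<in> set_pmf ?Y" "F \<in> set_pmf ?F" for Y F
  proof -
    have outside: "Y x = False" "F x = False" if "x \<notin> ?A" for x
      using set_Pi_pmf_subset[of ?A False] \<open>Y \<in> set_pmf ?Y\<close> \<open>F \<in> set_pmf ?F\<close> that by blast+
    have "Pi_pmf ?A False (\<lambda>x. return_pmf (Y x \<noteq> F x))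
        = return_pmf (\<lambda>x. if x \<in> ?A then Y x \<noteq> F x else False)"
      by (rule Pi_pmf_return_pmf) simp
    also have "(\<lambda>x. if x \<in> ?A then Y x \<noteq> F x else False) = (\<lambda>i. Y i \<noteq> F i)"
      using outside by auto
    finally show ?thesis .
  qed
  have "Pi_pmf ?A False (\<lambda>_. bernoulli_pmf (flip_prob \<nu> p))
      = Pi_pmf ?A False (\<lambda>_. bernoulli_pmf p \<bind> (\<lambda>y. bernoulli_pmf \<nu> \<bind> (\<lambda>f. return_pmf (y \<noteq> f))))"
    by (simp only: bernoulli_pmf_xor[OF assms])
  also have "\<dots> = ?Y \<bind> (\<lambda>Y. Pi_pmf ?A False (\<lambda>x. bernoulli_pmf \<nu> \<bind> (\<lambda>f. return_pmf (Y x \<noteq> f))))"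
    by (rule Pi_pmf_bind[where d' = False]) simp
  also have "\<dots> = ?Y \<bind> (\<lambda>Y. ?F \<bind> (\<lambda>F. Pi_pmf ?A False (\<lambda>x. return_pmf (Y x \<noteq> F x))))"
    by (intro bind_pmf_cong refl Pi_pmf_bind[where d' = False]) simp
  also have "\<dots> = noisy_labels m p \<nu>"
    unfolding noisy_labels_def by (intro bind_pmf_cong refl xor)
  finally show ?thesis ..
qed

lemma prob_Pi_pmf_bernoulli_card_eq_1:
  assumes "finite A" "0 \<le> r" "r \<le> 1"
  shows "measure_pmf.prob (Pi_pmf A False (\<lambda>_. bernoulli_pmf r)) {f. card {i\<in>A. f i} = 1}
       = real (card A) * r * (1 - r) ^ (card A - 1)"
proof -
  let ?M = "Pi_pmf A False (\<lambda>_. bernoulli_pmf r)"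
  let ?S = "{f. card {i\<in>A. f i} = 1}"
  let ?I = "(\<lambda>j i. i = j) ` A"
  have outside: "f i = False" if "f \<in> set_pmf ?M" "i \<notin> A" for f i
    using set_Pi_pmf_subset[OF assms(1), of False] that by blast
  have support: "?S \<inter> set_pmf ?M = ?I \<inter> set_pmf ?M"
  proof (intro equalityI subsetI)
    fix f assume f: "f \<in> ?S \<inter> set_pmf ?M"
    then obtain j where j: "{i\<in>A. f i} = {j}"
      by (auto simp: card_1_singleton_iff)
    have "f = (\<lambda>i. i = j)"
    proof
      fix i
      show "f i = (i = j)"
        using j outside[of f i] f by (cases "i \<in> A") auto
    qed
    with j f show "f \<in> ?I \<inter> set_pmf ?M" by blast
  next
    fix f assume f: "f \<in> ?I \<inter> set_pmf ?M"
    then obtain j where "j \<in> A" "f = (\<lambda>i. i = j)" by blast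
    then have "{i\<in>A. f i} = {j}" by auto
    with f show "f \<in> ?S \<inter> set_pmf ?M" by simp
  qed
  have "measure_pmf.prob ?M ?S = measure_pmf.prob ?M (?S \<inter> set_pmf ?M)"
    by (rule measure_Int_set_pmf[symmetric])
  also have "\<dots> = measure_pmf.prob ?M ?I"
    by (simp only: support measure_Int_set_pmf)
  also have "\<dots> = (\<Sum>j\<in>A. pmf ?M (\<lambda>i. i = j))"
    using assms(1)
    by (simp add: measure_measure_pmf_finite, subst sum.reindex) (auto simp: inj_on_def fun_eq_iff)
  also have "\<dots> = (\<Sum>j\<in>A. r * (1 - r) ^ (card A - 1))"
  proof (rule sum.cong[OF refl])
    fix j assume j: "j \<in> A"
    have "pmf ?M (\<lambda>i. i = j) = (\<Prod>x\<in>A. pmf (bernoulli_pmf r) (x = j))"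
      using assms(1) j by (subst pmf_Pi) auto
    also have "\<dots> = pmf (bernoulli_pmf r) True * (\<Prod>x\<in>A - {j}. pmf (bernoulli_pmf r) (x = j))"
      using assms(1) j by (subst prod.remove[of _ j]) auto
    also have "(\<Prod>x\<in>A - {j}. pmf (bernoulli_pmf r) (x = j)) = (\<Prod>x\<in>A - {j}. 1 - r)"
      using assms by (intro prod.cong) auto
    finally show "pmf ?M (\<lambda>i. i = j) = r * (1 - r) ^ (card A - 1)"
      using assms j by (simp add: card_Diff_singleton)
  qed
  finally show ?thesis by simp
qed

lemma auc_pair_pmf_bool:
  fixes M N :: "bool pmf"
  shows "measure_pmf.prob (pair_pmf M N) {(a, b). a \<and> \<not> b}
           + 1/2 * measure_pmf.prob (pair_pmf M N) {(a, b). a = b}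
         = 1/2 + (pmf M True - pmf N True) / 2"
proof -
  have M: "pmf M False = 1 - pmf M True" and N: "pmf N False = 1 - pmf N True"
    using pmf_False_conv_True by auto
  have "{(a, b). a \<and> \<not> b} = {(True, False)}" "{(a, b). a = b} = {(True, True), (False, False)}"
    by auto
  then show ?thesis
    by (simp add: measure_measure_pmf_finite pmf_pair M N field_simps)
qed

definition num_true :: "nat \<Rightarrow> (nat \<Rightarrow> bool) \<Rightarrow> nat" where
  "num_true m f = card {i\<in>{1..m}. f i}"

lemma rbar_anchor_True:
  assumes "1 \<le> k" "k \<le> m" "\<delta> > 0"
  shows "rbar m \<delta> k (True, f) = (if k \<le> num_true m f then 1 + \<delta> else 1)"
proof -
  let ?xs = "[1..<m+1]"
  let ?g = "\<lambda>i. score \<delta> True (f i)"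
  let ?T = "filter f ?xs" and ?F = "filter (\<lambda>i. \<not> f i) ?xs"
  have g: "?g i = (if f i then 1 + \<delta> else 1)" for i
    by (simp add: score_def)
  have length_T: "length ?T = num_true m f"
    unfolding num_true_def by (subst distinct_length_filter) (auto intro!: arg_cong[where f = card])
  have length_F: "length ?F = m - num_true m f"
    using sum_length_filter_compl[of f ?xs] length_T by (simp del: upt_Suc)
  have map_T: "map ?g ?T = replicate (length ?T) (1 + \<delta>)"
    by (intro replicate_eqI) (auto simp: g)
  have map_F: "map ?g ?F = replicate (length ?F) 1"
    by (intro replicate_eqI) (auto simp: g)
  have "mset (map ?g ?xs) = mset (map ?g ?T) + mset (map ?g ?F)"
    by (metis mset_filter image_mset_union mset_map multiset_partition)
  also have "\<dots> = mset (replicate (length ?F) 1 @ replicate (length ?T) (1 + \<delta>))"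
    unfolding map_T map_F mset_append by (rule add.commute)
  finally have "sort (map ?g ?xs) = replicate (length ?F) 1 @ replicate (length ?T) (1 + \<delta>)"
    using assms(3) by (intro properties_for_sort) (auto simp: sorted_append)
  then have "rbar m \<delta> k (True, f) = (replicate (length ?T) (1 + \<delta>) @ replicate (length ?F) 1) ! (k - 1)"
    by (simp add: rbar_def)
  then show ?thesis
    using assms length_T length_F by (auto simp: nth_append)
qed

lemma sample_pmf_anchors_True:
  "sample_pmf m \<rho> q \<nu> (return_pmf (True, True)) =
     map_pmf (\<lambda>(a, b). ((True, a), (True, b))) (pair_pmf (noisy_labels m \<rho> \<nu>) (noisy_labels m q \<nu>))"
  by (simp add: sample_pmf_def pair_pmf_def map_bind_pmf bind_return_pmf)

lemma probW_anchors_True: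
  assumes "1 \<le> k" "k \<le> m" "\<delta> > 0"
  shows "probW m \<rho> q \<nu> (return_pmf (True, True)) \<delta> k =
    1/2 + (measure_pmf.prob (noisy_labels m \<rho> \<nu>) {f. k \<le> num_true m f}
         - measure_pmf.prob (noisy_labels m q \<nu>) {f. k \<le> num_true m f}) / 2"
proof -
  let ?P = "noisy_labels m \<rho> \<nu>" and ?N = "noisy_labels m q \<nu>"
  let ?above = "\<lambda>f. k \<le> num_true m f"
  let ?val = "\<lambda>a. if a then 1 + \<delta> else 1 :: real"
  define B where "B = pair_pmf (map_pmf ?above ?P) (map_pmf ?above ?N)"
  have sample: "measure_pmf.prob (sample_pmf m \<rho> q \<nu> (return_pmf (True, True)))
      {(P, N). R (rbar m \<delta> k P) (rbar m \<delta> k N)} = measure_pmf.prob B {(a, b). R (?val a) (?val b)}"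
    for R :: "real \<Rightarrow> real \<Rightarrow> bool"
  proof -
    have "B = map_pmf (\<lambda>(a, b). (?above a, ?above b)) (pair_pmf ?P ?N)"
      unfolding B_def by (rule map_pair[symmetric])
    then show ?thesis
      using assms by (simp add: sample_pmf_anchors_True rbar_anchor_True vimage_def case_prod_beta)
  qed
  have greater: "{(a, b). ?val a > ?val b} = {(a, b). a \<and> \<not> b}"
    and equal: "{(a, b). ?val a = ?val b} = {(a, b). a = b}"
    using assms(3) by (auto split: if_splits)
  have "pmf (map_pmf ?above M) True = measure_pmf.prob M {f. ?above f}" for M
    by (simp add: pmf_map vimage_def)
  then show ?thesis
    unfolding probW_def sample[of "\<lambda>x y. x > y"] sample[of "(=)"] greater equal
    unfolding B_def auc_pair_pmf_bool by simp
qed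

lemma prob_ge_1_eq_1_plus_ge_2:
  fixes c :: "'a \<Rightarrow> nat"
  shows "measure_pmf.prob M {x. 1 \<le> c x}
       = measure_pmf.prob M {x. c x = 1} + measure_pmf.prob M {x. 2 \<le> c x}"
proof -
  have "{x. 1 \<le> c x} = {x. c x = 1} \<union> {x. 2 \<le> c x}"
    by auto
  also have "measure_pmf.prob M \<dots> = measure_pmf.prob M {x. c x = 1} + measure_pmf.prob M {x. 2 \<le> c x}"
    by (rule measure_pmf.finite_measure_Union) auto
  finally show ?thesis .
qed

theorem lemma4:
  fixes m :: nat and \<rho> q \<nu> \<delta> :: real and D :: "(bool \<times> bool) pmf"
  assumes "m \<ge> 2" and "q > 0" and "q < \<rho>" and "\<rho> < 1"
    and "0 \<le> \<nu>" and "\<nu> < 1/2" and "\<delta> > 0"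
    and "D = return_pmf (True, True)"
  shows "let \<rho>' = (1 - \<nu>) * \<rho> + \<nu> * (1 - \<rho>);
             q' = (1 - \<nu>) * q + \<nu> * (1 - q);
             a = 1 - \<rho>';
             \<gamma> = (1 - q') / (1 - \<rho>');
             A = real m * (1 - a) * a ^ (m - 1);
             G = real m * (1 - \<gamma> * a) * (\<gamma> * a) ^ (m - 1)
         in probW m \<rho> q \<nu> D \<delta> 2 - probW m \<rho> q \<nu> D \<delta> 1 = 1/2 * (G - A)"
proof -
  have m: "1 \<le> m" "2 \<le> m"
    using assms(1) by simp_all
  have probabilities: "0 \<le> q" "q \<le> 1" "0 \<le> \<rho>" "\<rho> \<le> 1"
    using assms(2-4) by simp_all
  have \<nu>: "0 \<le> \<nu>" "\<nu> \<le> 1"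
    using assms by simp_all
  have exactly_one: "measure_pmf.prob (noisy_labels m p \<nu>) {f. num_true m f = 1}
      = real m * flip_prob \<nu> p * (1 - flip_prob \<nu> p) ^ (m - 1)" if "0 \<le> p" "p \<le> 1" for p
    unfolding num_true_def noisy_labels_eq_Pi_pmf[OF that \<nu>]
    using prob_Pi_pmf_bernoulli_card_eq_1[of "{1..m}", OF finite_atLeastAtMost flip_prob_bounds[OF that \<nu>]]
    by simp
  have "probW m \<rho> q \<nu> D \<delta> 2 - probW m \<rho> q \<nu> D \<delta> 1
      = 1/2 * (measure_pmf.prob (noisy_labels m q \<nu>) {f. num_true m f = 1}
             - measure_pmf.prob (noisy_labels m \<rho> \<nu>) {f. num_true m f = 1})"
    unfolding assms(8) probW_anchors_True[OF order_refl m(1) assms(7)]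
      probW_anchors_True[OF one_le_numeral m(2) assms(7)] prob_ge_1_eq_1_plus_ge_2[where c = "num_true m"]
    by argo
  also have "\<dots> = 1/2 * (real m * flip_prob \<nu> q * (1 - flip_prob \<nu> q) ^ (m - 1)
                        - real m * flip_prob \<nu> \<rho> * (1 - flip_prob \<nu> \<rho>) ^ (m - 1))"
    unfolding exactly_one[OF probabilities(1,2)] exactly_one[OF probabilities(3,4)] ..
  finally have difference: "probW m \<rho> q \<nu> D \<delta> 2 - probW m \<rho> q \<nu> D \<delta> 1 = \<dots>" .
  have "1 - flip_prob \<nu> \<rho> > 0"
    using assms by (simp add: one_minus_flip_prob add_pos_nonneg)
  then show ?thesis
    unfolding Let_def flip_prob_def[symmetric] difference by simp
qed

end
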